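(* Let $R$ be a tournament on $[n]=\{1,\dots,n\}$. Then there is a positive integer $M$ such that for every integer $N\ge M$ there exist independent, proper $N$-sided dice $D_1,\dots,D_n$ such that for all $i,j\in[n]$, $$P(D_i>D_j)>\tfrac12 \iff (i,j)\in R .$$
   Context: A tournament on a set $I$ is a subset $R\subset I\times I$ such that for every pair of distinct $i,j\in I$ exactly one of $(i,j),(j,i)$ lies in $R$, and $R$ contains no pair $(i,i)$. An $N$-sided die is a random variable on a sample space of $N$ equally likely outcomes (faces) taking positive integer values; it is proper if all its values lie in $\{1,\dots,N\}$ and the sum of the values over the $N$ faces is $N(N+1)/2$ (equivalently its expected value is $(N+1)/2$). Independent dice means the corresponding random variables are independent. *)

theory Defs
  imports "HOL-Probability.Probability_Mass_Function"
begin

definition tournament :: "'a set \<Rightarrow> ('a \<times> 'a) set \<Rightarrow> bool" where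
  "tournament I R \<longleftrightarrow> R \<subseteq> I \<times> I \<and> (\<forall>i. (i, i) \<notin> R) \<and>
     (\<forall>i\<in>I. \<forall>j\<in>I. i \<noteq> j \<longrightarrow> ((i, j) \<in> R \<longleftrightarrow> (j, i) \<notin> R))"

text \<open>An N-sided die is given by its face values d 1, ..., d N (faces equally likely).\<close>
definition proper_die :: "nat \<Rightarrow> (nat \<Rightarrow> nat) \<Rightarrow> bool" where
  "proper_die N d \<longleftrightarrow> (\<forall>f\<in>{1..N}. d f \<in> {1..N}) \<and>
     real (\<Sum>f=1..N. d f) = real N * (real N + 1) / 2"

definition die_pmf :: "nat \<Rightarrow> (nat \<Rightarrow> nat) \<Rightarrow> nat pmf" where
  "die_pmf N d = map_pmf d (pmf_of_set {1..N})"

definition prob_beats :: "nat \<Rightarrow> (nat \<Rightarrow> nat) \<Rightarrow> (nat \<Rightarrow> nat) \<Rightarrow> real" where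
  "prob_beats N d e = measure_pmf.prob (pair_pmf (die_pmf N d) (die_pmf N e)) {(x, y). x > y}"

end

theory Submission
  imports Defs
begin

text \<open>
  The dice agree with the standard die (face f shows f) except on n^2 blocks of m = 2k+1
  consecutive faces, one block per ordered pair, and each die maps every block onto values
  of that same block with the same total. Faces in different blocks then compare as for
  standard dice, so the number of winning face pairs of D_i over D_j is N(N-1)/2 plus one
  correction per block, and a block on which one of the two dice is standard contributes
  nothing. On the block of an arc (a, b) of R, die a shows 0, 0, k+2, k+1, ..., k+1 (relative
  to the block) and die b shows k throughout, a gain of m(k-1) for a and a loss for b.
  Since P(D_i > D_j) > 1/2 means a correction above N/2, taking m of order N/n^2 finishes
  the proof for large N.
\<close>

section \<open>Winning probabilities as counts of face pairs\<close>

lemma pair_pmf_of_set: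
  assumes "finite A" "A \<noteq> {}" "finite B" "B \<noteq> {}"
  shows "pair_pmf (pmf_of_set A) (pmf_of_set B) = pmf_of_set (A \<times> B)"
proof (rule pmf_eqI)
  fix x :: "'a \<times> 'b"
  show "pmf (pair_pmf (pmf_of_set A) (pmf_of_set B)) x = pmf (pmf_of_set (A \<times> B)) x"
    using assms by (cases x) (simp add: pmf_pair card_cartesian_product indicator_def)
qed

definition wins :: "nat \<Rightarrow> (nat \<Rightarrow> nat) \<Rightarrow> (nat \<Rightarrow> nat) \<Rightarrow> int" where
  "wins N d e = (\<Sum>a\<in>{1..N}. \<Sum>b\<in>{1..N}. of_bool (e b < d a))"

lemma prob_beats_eq_wins:
  assumes "N > 0"
  shows "prob_beats N d e = wins N d e / (real N)^2"
proof -
  let ?S = "{1..N} \<times> {1..N}" and ?beats = "{p. e (snd p) < d (fst p)}"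
  have "pair_pmf (die_pmf N d) (die_pmf N e) = map_pmf (\<lambda>(a, b). (d a, e b)) (pmf_of_set ?S)"
    unfolding die_pmf_def using assms by (simp add: map_pair[symmetric] pair_pmf_of_set)
  then have "prob_beats N d e = measure (pmf_of_set ?S) ?beats"
    unfolding prob_beats_def by (simp add: vimage_def case_prod_unfold)
  also have "\<dots> = card (?S \<inter> ?beats) / (real N)^2"
    using assms by (simp add: measure_pmf_of_set card_cartesian_product power2_eq_square)
  also have "real (card (?S \<inter> ?beats)) = real_of_int (wins N d e)"
  proof -
    have "wins N d e = (\<Sum>p\<in>?S. of_bool (e (snd p) < d (fst p)))"
      unfolding wins_def by (simp only: sum.cartesian_product' fst_conv snd_conv)
    then show ?thesis by simp
  qed
  finally show ?thesis .
qed

lemma prob_beats_gt_half_iff: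
  assumes "N > 0"
  shows "prob_beats N d e > 1/2 \<longleftrightarrow> 2 * wins N d e > int N ^ 2"
proof -
  have "prob_beats N d e > 1/2 \<longleftrightarrow> 2 * real_of_int (wins N d e) > (real N)^2"
    using assms by (simp add: prob_beats_eq_wins field_simps)
  also have "\<dots> \<longleftrightarrow> 2 * wins N d e > int N ^ 2"
    by (metis of_int_less_iff of_int_mult of_int_numeral of_int_of_nat_eq of_int_power)
  finally show ?thesis .
qed

lemma wins_self_le: "2 * wins N d d \<le> int N ^ 2"
proof -
  have "2 * wins N d d = (\<Sum>a\<in>{1..N}. \<Sum>b\<in>{1..N}. of_bool (d b < d a) + of_bool (d a < d b))"
    unfolding wins_def mult_2 by (subst (2) sum.swap) (simp add: sum.distrib)
  also have "\<dots> \<le> (\<Sum>a\<in>{1..N}. \<Sum>b\<in>{1..N}. 1)"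
    by (intro sum_mono) auto
  finally show ?thesis
    by (simp add: power2_eq_square)
qed

lemma wins_id: "2 * wins N id id = int N * (int N - 1)"
proof -
  have "wins N id id = (\<Sum>a\<in>{1..N}. int (a - 1))"
    unfolding wins_def
  proof (intro sum.cong refl)
    fix a assume "a \<in> {1..N}"
    then have "{1..N} \<inter> {b. b < a} = {1..<a}" by auto
    then show "(\<Sum>b\<in>{1..N}. of_bool (id b < id a)) = int (a - 1)" by simp
  qed
  moreover have "2 * (\<Sum>a\<in>{1..N}. int (a - 1)) = int N * (int N - 1)"
    by (induction N) (auto simp: algebra_simps atLeastAtMostSuc_conv)
  ultimately show ?thesis by simp
qed

section \<open>Block dice\<close>

lemma sum_atLeastAtMost_blocks:
  fixes g :: "nat \<Rightarrow> 'a::comm_monoid_add"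
  shows "(\<Sum>f\<in>{1..P*m}. g f) = (\<Sum>q<P. \<Sum>r<m. g (q*m+1+r))"
proof -
  have "(\<Sum>f\<in>{1..P*m}. g f) = (\<Sum>f<P*m. g (Suc f))"
    by (simp add: sum.atLeast1_atMost_eq)
  also have "\<dots> = (\<Sum>q<P. \<Sum>f\<in>{q*m..<q*m+m}. g (Suc f))"
    by (rule sum.nat_group[symmetric])
  also have "\<dots> = (\<Sum>q<P. \<Sum>r<m. g (q*m+1+r))"
    by (simp add: sum.atLeastLessThan_shift_0 atLeast0LessThan)
  finally show ?thesis .
qed

lemma block_face_le:
  fixes q r :: nat
  assumes "q < P" "r < m"
  shows "q*m+1+r \<le> P*m"
proof -
  have "(q+1)*m \<le> P*m"
    using assms by (intro mult_right_mono) auto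
  then show ?thesis
    using assms by (simp add: algebra_simps)
qed

lemma block_face_cases:
  fixes f m :: nat
  assumes "f \<in> {1..P*m}"
  obtains q r where "q < P" "r < m" "f = q*m+1+r"
proof
  have "f - 1 < P*m" using assms by auto
  then show "(f - 1) div m < P"
    by (simp add: less_mult_imp_div_less)
  show "(f - 1) mod m < m"
    using \<open>f - 1 < P*m\<close> by (cases "m = 0") auto
  show "f = (f - 1) div m * m + 1 + (f - 1) mod m"
    using assms by simp
qed

text \<open>Faces 1..P*m form P blocks of m consecutive faces, and v q rearranges the values of
  block q: face q*m+1+r shows q*m+1 + v q r.\<close>
definition block_die :: "nat \<Rightarrow> nat \<Rightarrow> (nat \<Rightarrow> nat \<Rightarrow> nat) \<Rightarrow> nat \<Rightarrow> nat" where
  "block_die m P v f =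
     (if 1 \<le> f \<and> f \<le> P*m then (f - 1) div m * m + 1 + v ((f - 1) div m) ((f - 1) mod m) else f)"

lemma block_die_block:
  assumes "q < P" "r < m"
  shows "block_die m P v (q*m+1+r) = q*m+1 + v q r"
  using assms block_face_le[OF assms] by (simp add: block_die_def)

lemma block_die_outside: "P*m < f \<Longrightarrow> block_die m P v f = f"
  by (simp add: block_die_def)

lemma block_die_in_block:
  assumes "\<forall>q<P. \<forall>r<m. v q r < m" "f \<in> {1..P*m}"
  shows "block_die m P v f \<in> {1..P*m}" "(block_die m P v f - 1) div m = (f - 1) div m"
proof -
  obtain q r where qr: "q < P" "r < m" "f = q*m+1+r"
    using block_face_cases[OF assms(2)] .
  then have "block_die m P v f = q*m+1 + v q r"
    by (simp only: block_die_block)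
  moreover have "v q r < m" using assms(1) qr by blast
  ultimately show "block_die m P v f \<in> {1..P*m}" "(block_die m P v f - 1) div m = (f - 1) div m"
    using qr block_face_le[of q P "v q r" m] by simp_all
qed

text \<open>Faces beyond the blocks are singleton blocks, so that block_index is monotone and
  preserved by every block die: faces of different blocks compare like their blocks.\<close>
definition block_index :: "nat \<Rightarrow> nat \<Rightarrow> nat \<Rightarrow> nat" where
  "block_index m P f = (if f \<le> P*m then (f - 1) div m else f)"

lemma block_index_le: "block_index m P f \<le> f"
  by (simp add: block_index_def le_trans[OF div_le_dividend])

lemma mono_block_index: "mono (block_index m P)"
proof (rule monoI)
  fix x y :: nat assume "x \<le> y"
  show "block_index m P x \<le> block_index m P y"
  proof (cases "y \<le> P*m")
    case True
    then show ?thesis using \<open>x \<le> y\<close> by (simp add: block_index_def div_le_mono)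
  next
    case False
    then show ?thesis
      using \<open>x \<le> y\<close> block_index_le[of m P x] by (simp add: block_index_def)
  qed
qed

lemma block_index_block_die:
  assumes "\<forall>q<P. \<forall>r<m. v q r < m"
  shows "block_index m P (block_die m P v f) = block_index m P f"
proof (cases "f \<in> {1..P*m}")
  case True
  then show ?thesis
    using block_die_in_block[OF assms True] by (simp add: block_index_def)
next
  case False
  then show ?thesis by (auto simp: block_die_def)
qed

lemma block_index_eq_outside:
  assumes "P*m < f" "block_index m P g = block_index m P f"
  shows "g = f"
  using assms block_index_le[of m P g] by (auto simp: block_index_def split: if_splits)

lemma block_die_less_iff:
  assumes "\<forall>q<P. \<forall>r<m. v q r < m" "\<forall>q<P. \<forall>r<m. w q r < m"
    and "block_index m P a \<noteq> block_index m P b"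
  shows "block_die m P w b < block_die m P v a \<longleftrightarrow> b < a"
proof -
  let ?g = "block_index m P"
  have inv: "x < y" if "?g x < ?g y" for x y
    using mono_block_index that by (metis monoD not_less)
  have g_die: "?g (block_die m P v a) = ?g a" "?g (block_die m P w b) = ?g b"
    using block_index_block_die assms(1,2) by blast+
  consider "?g b < ?g a" | "?g a < ?g b"
    using assms(3) by linarith
  then show ?thesis
  proof cases
    case 1
    then show ?thesis using inv[of b a] inv[of "block_die m P w b" "block_die m P v a"] g_die by simp
  next
    case 2
    then show ?thesis using inv[of a b] inv[of "block_die m P v a" "block_die m P w b"] g_die by simp
  qed
qed

lemma block_die_less_iff_outside:
  assumes "\<forall>q<P. \<forall>r<m. v q r < m" "\<forall>q<P. \<forall>r<m. w q r < m" and "P*m < a \<or> P*m < b"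
  shows "block_die m P w b < block_die m P v a \<longleftrightarrow> b < a"
proof (cases "block_index m P a = block_index m P b")
  case True
  then have "a = b" using assms(3) block_index_eq_outside by metis
  then show ?thesis using assms(3) by (simp add: block_die_outside)
qed (rule block_die_less_iff[OF assms(1,2)])

definition excess_wins :: "nat \<Rightarrow> (nat \<Rightarrow> nat) \<Rightarrow> (nat \<Rightarrow> nat) \<Rightarrow> int" where
  "excess_wins m v w = (\<Sum>r<m. \<Sum>s<m. of_bool (w s < v r) - of_bool (s < r))"

lemma wins_block_die:
  assumes PN: "P*m \<le> N" and v: "\<forall>q<P. \<forall>r<m. v q r < m" and w: "\<forall>q<P. \<forall>r<m. w q r < m"
  shows "wins N (block_die m P v) (block_die m P w) = wins N id id + (\<Sum>q<P. excess_wins m (v q) (w q))"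
proof -
  define h where
    "h a b = (of_bool (block_die m P w b < block_die m P v a) - of_bool (b < a) :: int)" for a b
  have h_outside: "h a b = 0" if "P*m < a \<or> P*m < b" for a b
    using block_die_less_iff_outside[OF v w that] by (simp add: h_def)
  have h_blocks: "h (q*m+1+r) (q'*m+1+s) = (if q = q' then of_bool (w q s < v q r) - of_bool (s < r) else 0)"
    if "q < P" "q' < P" "r < m" "s < m" for q q' r s
  proof (cases "q = q'")
    case True
    have "block_die m P v (q*m+1+r) = q*m+1 + v q r" "block_die m P w (q*m+1+s) = q*m+1 + w q s"
      using that True by (simp_all only: block_die_block)
    then show ?thesis using True by (simp add: h_def)
  next
    case False
    have "block_index m P (q*m+1+r) = q" "block_index m P (q'*m+1+s) = q'"
      using that block_face_le[of q P r m] block_face_le[of q' P s m] by (simp_all add: block_index_def)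
    then show ?thesis using False block_die_less_iff[OF v w] by (simp add: h_def)
  qed
  have "wins N (block_die m P v) (block_die m P w) - wins N id id = (\<Sum>a\<in>{1..N}. \<Sum>b\<in>{1..N}. h a b)"
    unfolding wins_def h_def by (simp add: sum_subtractf)
  also have "\<dots> = (\<Sum>a\<in>{1..P*m}. \<Sum>b\<in>{1..N}. h a b)"
    using PN h_outside by (intro sum.mono_neutral_right) (auto intro!: sum.neutral)
  also have "\<dots> = (\<Sum>a\<in>{1..P*m}. \<Sum>b\<in>{1..P*m}. h a b)"
    using PN h_outside by (intro sum.cong refl sum.mono_neutral_right) auto
  also have "\<dots> = (\<Sum>q<P. \<Sum>r<m. \<Sum>q'<P. \<Sum>s<m. h (q*m+1+r) (q'*m+1+s))"
    by (simp only: sum_atLeastAtMost_blocks)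
  also have "\<dots> = (\<Sum>q<P. excess_wins m (v q) (w q))"
    unfolding excess_wins_def
  proof (rule sum.cong[OF refl], rule sum.cong[OF refl])
    fix q r assume q: "q \<in> {..<P}" and r: "r \<in> {..<m}"
    have "(\<Sum>q'<P. \<Sum>s<m. h (q*m+1+r) (q'*m+1+s)) = (\<Sum>s<m. h (q*m+1+r) (q*m+1+s))"
      using q r h_blocks by (subst sum.mono_neutral_right[of "{..<P}" "{q}"]) (auto intro!: sum.neutral)
    also have "\<dots> = (\<Sum>s<m. of_bool (w q s < v q r) - of_bool (s < r))"
      using q r h_blocks by (intro sum.cong refl) auto
    finally show "(\<Sum>q'<P. \<Sum>s<m. h (q*m+1+r) (q'*m+1+s)) = (\<Sum>s<m. of_bool (w q s < v q r) - of_bool (s < r))" .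
  qed
  finally show ?thesis by simp
qed

text \<open>A balanced pattern is a proper m-sided die with values shifted down to 0, ..., m-1.\<close>
definition balanced :: "nat \<Rightarrow> (nat \<Rightarrow> nat) \<Rightarrow> bool" where
  "balanced m u \<longleftrightarrow> (\<forall>r<m. u r < m) \<and> (\<Sum>r<m. u r) = (\<Sum>r<m. r)"

lemma sum_block_die:
  assumes PN: "P*m \<le> N" and bal: "\<forall>q<P. balanced m (v q)"
  shows "(\<Sum>f\<in>{1..N}. block_die m P v f) = (\<Sum>f\<in>{1..N}. f)"
proof -
  have "(\<Sum>f\<in>{1..P*m}. block_die m P v f) = (\<Sum>q<P. \<Sum>r<m. q*m+1 + v q r)"
    unfolding sum_atLeastAtMost_blocks by (intro sum.cong refl) (simp only: block_die_block lessThan_iff)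
  also have "\<dots> = (\<Sum>q<P. \<Sum>r<m. q*m+1 + r)"
  proof (rule sum.cong[OF refl])
    fix q assume "q \<in> {..<P}"
    then have "(\<Sum>r<m. v q r) = (\<Sum>r<m. r)" using bal by (simp add: balanced_def)
    then show "(\<Sum>r<m. q*m+1 + v q r) = (\<Sum>r<m. q*m+1 + r)" by (simp only: sum.distrib)
  qed
  also have "\<dots> = (\<Sum>f\<in>{1..P*m}. f)"
    by (simp only: sum_atLeastAtMost_blocks)
  finally have blocks: "(\<Sum>f\<in>{1..P*m}. block_die m P v f) = (\<Sum>f\<in>{1..P*m}. f)" .
  have sub: "{1..P*m} \<subseteq> {1..N}" using PN by auto
  have "(\<Sum>f\<in>{1..N}. block_die m P v f) =
      (\<Sum>f\<in>{1..N} - {1..P*m}. block_die m P v f) + (\<Sum>f\<in>{1..P*m}. block_die m P v f)"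
    by (rule sum.subset_diff[OF sub]) simp
  also have "(\<Sum>f\<in>{1..N} - {1..P*m}. block_die m P v f) = (\<Sum>f\<in>{1..N} - {1..P*m}. f)"
    by (intro sum.cong refl) (auto simp: block_die_outside)
  also note blocks
  also have "(\<Sum>f\<in>{1..N} - {1..P*m}. f) + (\<Sum>f\<in>{1..P*m}. f) = (\<Sum>f\<in>{1..N}. f)"
    by (rule sum.subset_diff[OF sub, symmetric]) simp
  finally show ?thesis .
qed

lemma proper_block_die:
  assumes PN: "P*m \<le> N" and bal: "\<forall>q<P. balanced m (v q)"
  shows "proper_die N (block_die m P v)"
proof -
  have "block_die m P v f \<in> {1..N}" if "f \<in> {1..N}" for f
  proof (cases "f \<le> P*m")
    case True
    then show ?thesis
      using that PN block_die_in_block(1)[of P m v f] bal by (force simp: balanced_def)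
  next
    case False
    then show ?thesis using that by (simp add: block_die_outside)
  qed
  moreover have "real (\<Sum>f\<in>{1..N}. f) = real N * (real N + 1) / 2"
    using double_gauss_sum_from_Suc_0[of N, where 'a = real] by (simp add: of_nat_sum)
  ultimately show ?thesis
    unfolding proper_die_def using sum_block_die[OF assms] by simp
qed

section \<open>Block patterns\<close>

lemma excess_wins_eq:
  "excess_wins m v w = (\<Sum>r<m. \<Sum>s<m. of_bool (w s < v r)) - (\<Sum>r<m. int r)"
proof -
  have "(\<Sum>s<m. of_bool (s < r)) = int r" if "r < m" for r
  proof -
    have "{..<m} \<inter> {s. s < r} = {..<r}" using that by auto
    then show ?thesis by simp
  qed
  then show ?thesis
    unfolding excess_wins_def by (simp add: sum_subtractf)
qed

lemma excess_wins_id_right: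
  assumes "balanced m v"
  shows "excess_wins m v id = 0"
proof -
  have "(\<Sum>r<m. \<Sum>s<m. of_bool (id s < v r)) = (\<Sum>r<m. int (v r))"
  proof (rule sum.cong[OF refl])
    fix r assume "r \<in> {..<m}"
    then have "{..<m} \<inter> {s. s < v r} = {..<v r}" using assms by (auto simp: balanced_def)
    then show "(\<Sum>s<m. of_bool (id s < v r)) = int (v r)" by simp
  qed
  also have "\<dots> = (\<Sum>r<m. int r)"
    using assms by (simp add: balanced_def flip: of_nat_sum)
  finally show ?thesis by (simp add: excess_wins_eq)
qed

lemma excess_wins_id_left:
  assumes "balanced m w"
  shows "excess_wins m id w = 0"
proof -
  have card_above: "card ({..<m} \<inter> {r. x < r}) = m - Suc x" for x
  proof -
    have "{..<m} \<inter> {r. x < r} = {x<..<m}" by auto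
    then show ?thesis by simp
  qed
  have "excess_wins m id w = (\<Sum>s<m. \<Sum>r<m. of_bool (w s < r) - of_bool (s < r))"
    unfolding excess_wins_def by (subst sum.swap) simp
  also have "\<dots> = (\<Sum>s<m. int s - int (w s))"
  proof (rule sum.cong[OF refl])
    fix s assume "s \<in> {..<m}"
    then have "Suc (w s) \<le> m" "Suc s \<le> m" using assms by (auto simp: balanced_def Suc_le_eq)
    then show "(\<Sum>r<m. of_bool (w s < r) - of_bool (s < r)) = int s - int (w s)"
      by (simp add: sum_subtractf card_above of_nat_diff)
  qed
  also have "\<dots> = 0"
    using assms by (simp add: balanced_def sum_subtractf flip: of_nat_sum)
  finally show ?thesis .
qed

lemma balanced_id: "balanced m id"
  by (simp add: balanced_def)

lemma sum_lessThan_odd: "(\<Sum>r<2*k+1. r) = k * (2*k+1)" for k :: nat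
proof -
  have "(\<Sum>r<n. r) = n * (n - 1) div 2" for n :: nat
    by (simp add: lessThan_atLeast0 Sum_Ico_nat)
  from this[of "2*k+1"] show ?thesis by simp
qed

lemma balanced_const: "balanced (2*k+1) (\<lambda>_. k)"
  unfolding balanced_def sum_lessThan_odd by simp

text \<open>Against the constant pattern k, the pattern skewed k wins on all but two faces.\<close>
definition skewed :: "nat \<Rightarrow> nat \<Rightarrow> nat" where
  "skewed k r = (if r < 2 then 0 else if r = 2 then k + 2 else k + 1)"

lemma balanced_skewed:
  assumes "k \<ge> 2"
  shows "balanced (2*k+1) (skewed k)"
proof -
  obtain j where k: "k = j + 2" using assms le_Suc_ex by (metis add.commute)
  have sum_prefix: "(\<Sum>r<i+3. skewed k r) = k + 2 + i * (k+1)" for i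
    by (induction i) (simp_all add: skewed_def eval_nat_numeral)
  have "2*k+1 = 2*j+2+3" by (simp add: k)
  then have "(\<Sum>r<2*k+1. skewed k r) = k + 2 + (2*j+2) * (k+1)"
    by (simp only: sum_prefix)
  also have "\<dots> = k * (2*k+1)"
    by (simp add: k algebra_simps)
  finally have sum_skewed: "(\<Sum>r<2*k+1. skewed k r) = k * (2*k+1)" .
  show ?thesis
    unfolding balanced_def sum_lessThan_odd sum_skewed using assms by (simp add: skewed_def)
qed

lemma excess_wins_odd:
  "excess_wins (2*k+1) v w = (\<Sum>r<2*k+1. \<Sum>s<2*k+1. of_bool (w s < v r)) - int k * int (2*k+1)"
proof -
  have "(\<Sum>r<2*k+1. int r) = int (\<Sum>r<2*k+1. r)"
    by (simp only: of_nat_sum)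
  also have "\<dots> = int k * int (2*k+1)"
    by (simp only: sum_lessThan_odd of_nat_mult)
  finally show ?thesis
    by (simp only: excess_wins_eq)
qed

lemma excess_wins_skewed_const:
  assumes "k \<ge> 2"
  shows "excess_wins (2*k+1) (skewed k) (\<lambda>_. k) = int (2*k+1) * (int k - 1)"
proof -
  define m where "m = 2*k+1"
  have "{..<m} \<inter> {r. k < skewed k r} = {2..<m}"
    using assms by (auto simp: skewed_def m_def)
  then have "(\<Sum>r<m. \<Sum>s<m. of_bool (k < skewed k r)) = int m * int (m - 2)"
    by (simp flip: sum_distrib_left del: sum_of_bool_eq) simp
  then have "excess_wins m (skewed k) (\<lambda>_. k) = int m * int (m - 2) - int k * int m"
    unfolding m_def excess_wins_odd by (simp only:)
  also have "\<dots> = int m * (int k - 1)"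
    using assms by (simp add: m_def of_nat_diff algebra_simps)
  finally show ?thesis unfolding m_def .
qed

lemma excess_wins_const_skewed:
  assumes "k \<ge> 2"
  shows "excess_wins (2*k+1) (\<lambda>_. k) (skewed k) = int (2*k+1) * (2 - int k)"
proof -
  define m where "m = 2*k+1"
  have "{..<m} \<inter> {s. skewed k s < k} = {0, 1}"
    using assms by (auto simp: skewed_def m_def)
  then have "(\<Sum>r<m. \<Sum>s<m. of_bool (skewed k s < k)) = int m * 2"
    by simp
  then have "excess_wins m (\<lambda>_. k) (skewed k) = int m * 2 - int k * int m"
    unfolding m_def excess_wins_odd by (simp only:)
  also have "\<dots> = int m * (2 - int k)"
    by (simp add: algebra_simps)
  finally show ?thesis unfolding m_def .
qed

section \<open>Dice realising a tournament\<close>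

lemma tournament_irrefl: "tournament I R \<Longrightarrow> (i, i) \<notin> R"
  unfolding tournament_def by blast

lemma tournament_asym_iff:
  "tournament I R \<Longrightarrow> i \<in> I \<Longrightarrow> j \<in> I \<Longrightarrow> i \<noteq> j \<Longrightarrow> (i, j) \<in> R \<longleftrightarrow> (j, i) \<notin> R"
  unfolding tournament_def by blast

definition pair_block :: "nat \<Rightarrow> nat \<Rightarrow> nat \<Rightarrow> nat" where
  "pair_block n a b = (a - 1) * n + (b - 1)"

lemma pair_block_less:
  assumes "a \<in> {1..n}" "b \<in> {1..n}"
  shows "pair_block n a b < n * n"
proof -
  obtain a' b' where ab: "a = Suc a'" "b = Suc b'" "a' < n" "b' < n"
    using assms by (cases a; cases b) auto
  have "a' * n + b' < Suc a' * n" using ab by simp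
  also have "\<dots> \<le> n * n" using ab by (intro mult_right_mono) auto
  finally show ?thesis by (simp add: pair_block_def ab)
qed

lemma pair_block_decode:
  assumes "a \<in> {1..n}" "b \<in> {1..n}"
  shows "pair_block n a b div n + 1 = a" "pair_block n a b mod n + 1 = b"
  using assms by (cases a; cases b; simp add: pair_block_def)+

text \<open>Block q of the dice is reserved for the ordered pair (q div n + 1, q mod n + 1).\<close>
definition tournament_pattern :: "(nat \<times> nat) set \<Rightarrow> nat \<Rightarrow> nat \<Rightarrow> nat \<Rightarrow> nat \<Rightarrow> nat \<Rightarrow> nat" where
  "tournament_pattern R n k i q =
     (if (q div n + 1, q mod n + 1) \<in> R then
        (if i = q div n + 1 then skewed k else if i = q mod n + 1 then (\<lambda>_. k) else id)
      else id)"

lemma tournament_pattern_pair_block: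
  assumes "a \<in> {1..n}" "b \<in> {1..n}"
  shows "tournament_pattern R n k i (pair_block n a b) =
    (if (a, b) \<in> R then (if i = a then skewed k else if i = b then (\<lambda>_. k) else id) else id)"
  using pair_block_decode[OF assms] by (simp add: tournament_pattern_def)

lemma balanced_tournament_pattern:
  "k \<ge> 2 \<Longrightarrow> balanced (2*k+1) (tournament_pattern R n k i q)"
  using balanced_skewed[of k] balanced_const[of k] balanced_id[of "2*k+1"]
  by (simp add: tournament_pattern_def)

lemma excess_wins_tournament_pattern_other:
  assumes ij: "i \<noteq> j" and k: "k \<ge> 2"
    and q: "q < n * n" "q \<noteq> pair_block n i j" "q \<noteq> pair_block n j i"
  shows "excess_wins (2*k+1) (tournament_pattern R n k i q) (tournament_pattern R n k j q) = 0"
proof -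
  define a b where "a = q div n + 1" and "b = q mod n + 1"
  have "n > 0" using q(1) by (cases n) auto
  then have "q div n < n" "q mod n < n"
    using q(1) by (simp_all add: less_mult_imp_div_less)
  then have ab: "a \<in> {1..n}" "b \<in> {1..n}" and q_ab: "q = pair_block n a b"
    by (simp_all add: a_def b_def pair_block_def Suc_le_eq)
  consider "(a, b) \<notin> R" | "i \<notin> {a, b}" | "j \<notin> {a, b}"
    using ij q(2,3) q_ab by auto
  then show ?thesis
  proof cases
    case 1
    then have "tournament_pattern R n k x q = id" for x
      by (simp add: q_ab tournament_pattern_pair_block[OF ab])
    then show ?thesis
      using excess_wins_id_right[OF balanced_id] by simp
  next
    case 2
    then have "tournament_pattern R n k i q = id"
      by (simp add: q_ab tournament_pattern_pair_block[OF ab])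
    then show ?thesis
      using excess_wins_id_left[OF balanced_tournament_pattern[OF k]] by simp
  next
    case 3
    then have "tournament_pattern R n k j q = id"
      by (simp add: q_ab tournament_pattern_pair_block[OF ab])
    then show ?thesis
      using excess_wins_id_right[OF balanced_tournament_pattern[OF k]] by simp
  qed
qed

lemma sum_excess_wins_tournament_pattern:
  assumes T: "tournament {1..n} R" and i: "i \<in> {1..n}" and j: "j \<in> {1..n}" and ij: "i \<noteq> j"
    and k: "k \<ge> 2"
  shows "(\<Sum>q<n*n. excess_wins (2*k+1) (tournament_pattern R n k i q) (tournament_pattern R n k j q)) =
    (if (i, j) \<in> R then excess_wins (2*k+1) (skewed k) (\<lambda>_. k)
     else excess_wins (2*k+1) (\<lambda>_. k) (skewed k))"
proof -
  let ?E = "\<lambda>q. excess_wins (2*k+1) (tournament_pattern R n k i q) (tournament_pattern R n k j q)"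
  let ?tp = "\<lambda>x a b. tournament_pattern R n k x (pair_block n a b)"
  have distinct: "pair_block n i j \<noteq> pair_block n j i"
  proof
    assume "pair_block n i j = pair_block n j i"
    then have "pair_block n i j div n + 1 = pair_block n j i div n + 1" by (rule arg_cong)
    then show False using pair_block_decode(1)[OF i j] pair_block_decode(1)[OF j i] ij by simp
  qed
  have "(\<Sum>q<n*n. ?E q) = (\<Sum>q\<in>{pair_block n i j, pair_block n j i}. ?E q)"
  proof (rule sum.mono_neutral_right)
    show "{pair_block n i j, pair_block n j i} \<subseteq> {..<n*n}"
      using pair_block_less[OF i j] pair_block_less[OF j i] by simp
    show "\<forall>q\<in>{..<n*n} - {pair_block n i j, pair_block n j i}. ?E q = 0"
      using excess_wins_tournament_pattern_other[OF ij k] by blast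
  qed simp
  also have "\<dots> = ?E (pair_block n i j) + ?E (pair_block n j i)"
    using distinct by simp
  also have "\<dots> = (if (i, j) \<in> R then excess_wins (2*k+1) (skewed k) (\<lambda>_. k)
                    else excess_wins (2*k+1) (\<lambda>_. k) (skewed k))"
  proof (cases "(i, j) \<in> R")
    case True
    then have "(j, i) \<notin> R" using tournament_asym_iff[OF T i j ij] by blast
    then have "?tp x j i = id" for x
      by (simp add: tournament_pattern_pair_block[OF j i])
    moreover have "?tp i i j = skewed k" "?tp j i j = (\<lambda>_. k)"
      using True ij by (simp_all add: tournament_pattern_pair_block[OF i j])
    ultimately show ?thesis
      using True excess_wins_id_right[OF balanced_id] by simp
  next
    case False
    then have "(j, i) \<in> R" using tournament_asym_iff[OF T i j ij] by blast
    then have "?tp j j i = skewed k" "?tp i j i = (\<lambda>_. k)"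
      using ij by (simp_all add: tournament_pattern_pair_block[OF j i])
    moreover have "?tp x i j = id" for x
      using False by (simp add: tournament_pattern_pair_block[OF i j])
    ultimately show ?thesis
      using False excess_wins_id_right[OF balanced_id] by simp
  qed
  finally show ?thesis .
qed

definition tournament_dice :: "(nat \<times> nat) set \<Rightarrow> nat \<Rightarrow> nat \<Rightarrow> nat \<Rightarrow> nat \<Rightarrow> nat" where
  "tournament_dice R n k i = block_die (2*k+1) (n*n) (tournament_pattern R n k i)"

lemma proper_tournament_dice:
  assumes "k \<ge> 2" "n*n*(2*k+1) \<le> N"
  shows "proper_die N (tournament_dice R n k i)"
  unfolding tournament_dice_def
  using assms balanced_tournament_pattern by (intro proper_block_die) auto

lemma wins_tournament_dice:
  assumes T: "tournament {1..n} R" and i: "i \<in> {1..n}" and j: "j \<in> {1..n}" and ij: "i \<noteq> j"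
    and k: "k \<ge> 2" and N: "n*n*(2*k+1) \<le> N"
  shows "2 * wins N (tournament_dice R n k i) (tournament_dice R n k j) =
    int N * (int N - 1) + 2 * int (2*k+1) * (if (i, j) \<in> R then int k - 1 else 2 - int k)"
proof -
  have "\<forall>q<n*n. \<forall>r<2*k+1. tournament_pattern R n k x q r < 2*k+1" for x
    using balanced_tournament_pattern[OF k] by (simp add: balanced_def)
  then have "wins N (tournament_dice R n k i) (tournament_dice R n k j) = wins N id id +
      (\<Sum>q<n*n. excess_wins (2*k+1) (tournament_pattern R n k i q) (tournament_pattern R n k j q))"
    unfolding tournament_dice_def using N by (intro wins_block_die) auto
  then show ?thesis
    using wins_id[of N] sum_excess_wins_tournament_pattern[OF T i j ij k]
      excess_wins_skewed_const[OF k] excess_wins_const_skewed[OF k]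
    by (simp add: algebra_simps)
qed

lemma prob_beats_tournament_dice:
  assumes T: "tournament {1..n} R" and i: "i \<in> {1..n}" and j: "j \<in> {1..n}"
    and k: "k \<ge> 2" and N: "n*n*(2*k+1) \<le> N" "N < (2*k+1) * (2*k-2)"
  shows "prob_beats N (tournament_dice R n k i) (tournament_dice R n k j) > 1/2 \<longleftrightarrow> (i, j) \<in> R"
proof -
  have "0 < n*n*(2*k+1)" using i by simp
  with N(1) have N_pos: "N > 0" by linarith
  show ?thesis
  proof (cases "i = j")
    case True
    then show ?thesis
      using tournament_irrefl[OF T] wins_self_le[of N] prob_beats_gt_half_iff[OF N_pos] by (simp add: not_less)
  next
    case False
    let ?W = "wins N (tournament_dice R n k i) (tournament_dice R n k j)"
    have W: "2 * ?W = int N * (int N - 1) + 2 * int (2*k+1) * (if (i, j) \<in> R then int k - 1 else 2 - int k)"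
      by (rule wins_tournament_dice[OF T i j False k N(1)])
    show ?thesis
    proof (cases "(i, j) \<in> R")
      case True
      have "int (2*k-2) = 2 * int k - 2" using k by simp
      then have "int ((2*k+1) * (2*k-2)) = int (2*k+1) * (2 * int k - 2)" by (simp only: of_nat_mult)
      with N(2) have "int N < int (2*k+1) * (2 * int k - 2)" by linarith
      then have "2 * ?W > int N ^ 2" using W True by (simp add: power2_eq_square algebra_simps)
      then show ?thesis using True prob_beats_gt_half_iff[OF N_pos] by simp
    next
      case False
      have "int (2*k+1) * (2 - int k) \<le> 0" using k by (simp add: mult_nonneg_nonpos)
      then have "2 * ?W \<le> int N ^ 2" using W False by (simp add: power2_eq_square algebra_simps)
      then show ?thesis using False prob_beats_gt_half_iff[OF N_pos] by simp
    qed
  qed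
qed

lemma exists_block_size:
  fixes K :: nat
  shows "\<exists>M>0. \<forall>N\<ge>M. \<exists>k\<ge>2. K * (2*k+1) \<le> N \<and> N < (2*k+1) * (2*k-2)"
proof -
  define L where "L = 4 * (K + 1)"
  have "\<exists>k\<ge>2. K * (2*k+1) \<le> N \<and> N < (2*k+1) * (2*k-2)" if N: "L * (L + 4) \<le> N" for N
  proof -
    define k where "k = N div L"
    have "L > 0" by (simp add: L_def)
    have "L + 4 \<le> k"
      using div_le_mono[OF N, of L] \<open>L > 0\<close> by (simp add: k_def)
    then obtain t where t: "k = L + 4 + t" using le_Suc_ex by blast
    have "N = L * k + N mod L" "N mod L < L"
      using \<open>L > 0\<close> by (simp_all add: k_def)
    then have "L * k \<le> N" "N < L * (k + 1)"
      by (simp_all add: algebra_simps)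
    moreover have "K * (2*k+1) \<le> L * k"
      by (simp add: L_def t algebra_simps)
    moreover have "L * (k + 1) \<le> (2*k+1) * (2*k-2)"
      by (simp add: t algebra_simps)
    moreover have "k \<ge> 2"
      using t by simp
    ultimately show ?thesis
      by (meson le_trans less_le_trans)
  qed
  then show ?thesis
    by (intro exI[of _ "L * (L + 4)"]) (simp add: L_def)
qed

theorem theorem1p1:
  fixes n :: nat and R :: "(nat \<times> nat) set"
  assumes "tournament {1..n} R"
  shows "\<exists>M::nat. M > 0 \<and> (\<forall>N\<ge>M. \<exists>D :: nat \<Rightarrow> nat \<Rightarrow> nat.
           (\<forall>i\<in>{1..n}. proper_die N (D i)) \<and>
           (\<forall>i\<in>{1..n}. \<forall>j\<in>{1..n}. prob_beats N (D i) (D j) > 1/2 \<longleftrightarrow> (i, j) \<in> R))"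
proof -
  obtain M where "M > 0" and M: "\<forall>N\<ge>M. \<exists>k\<ge>2. n*n * (2*k+1) \<le> N \<and> N < (2*k+1) * (2*k-2)"
    using exists_block_size by blast
  have "\<exists>D. (\<forall>i\<in>{1..n}. proper_die N (D i)) \<and>
           (\<forall>i\<in>{1..n}. \<forall>j\<in>{1..n}. prob_beats N (D i) (D j) > 1/2 \<longleftrightarrow> (i, j) \<in> R)"
    if "N \<ge> M" for N
  proof -
    obtain k where k: "k \<ge> 2" and N: "n*n * (2*k+1) \<le> N" "N < (2*k+1) * (2*k-2)"
      using M \<open>N \<ge> M\<close> by blast
    show ?thesis
    proof (rule exI[of _ "tournament_dice R n k"], intro conjI ballI)
      fix i show "proper_die N (tournament_dice R n k i)"
        by (rule proper_tournament_dice[OF k N(1)])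
    next
      fix i j assume "i \<in> {1..n}" "j \<in> {1..n}"
      then show "prob_beats N (tournament_dice R n k i) (tournament_dice R n k j) > 1/2 \<longleftrightarrow> (i, j) \<in> R"
        by (rule prob_beats_tournament_dice[OF assms _ _ k N])
    qed
  qed
  with \<open>M > 0\<close> show ?thesis by blast
qed

end
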